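(* Let $n\in\mathbb{N}^*$. Then, almost surely, $$\sup_{f}\ \Big|\mathbb{E}\big[f(Z)\mid\overline Z^{1:\infty}\big]-\mathbb{E}_{\overline Z^n}(f)\Big| \;=\;\sup_{f\in\mathcal L,\ \|f\|_{\mathcal L}\le1}\Big|\mathbb{E}[f(Z)]-\mathbb{E}_{\overline Z^n}(f)\Big|,$$ where the supremum on the left is over all $\overline Z^{1:\infty}$-measurable random functions $f$ such that $\|f\|_{\mathcal L}\le1$ almost surely.
   Context: $Z$ is an $\mathbb{R}^d$-valued random vector with law $\nu$. $\mathcal L$ denotes the Lipschitz functions $\mathbb{R}^d\to\mathbb{R}$ and $\|f\|_{\mathcal L}$ the Lipschitz constant. $(M_n)_{n\ge1}$ are positive integers; $\overline Z^n=(Z^n_k)_{1\le k\le M_n}$ where all $Z^n_k$ ($n\ge1$, $1\le k\le M_n$) are i.i.d. with law $\nu$ and independent of $Z$; $\overline Z^{1:\infty}=(\overline Z^n)_{n\ge1}$. For a collection $\overline Z=(Z_k)_{k\le M}$, $\mathbb{E}_{\overline Z}(f)=\frac1M\sum_{k=1}^Mf(Z_k)$. *)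

theory Defs
  imports "HOL-Probability.Probability"
begin

definition is_ess_sup :: "'a measure \<Rightarrow> ('a \<Rightarrow> real) set \<Rightarrow> ('a \<Rightarrow> real) \<Rightarrow> bool" where
  "is_ess_sup M XX Y \<longleftrightarrow>
     Y \<in> borel_measurable M \<and>
     (\<forall>X\<in>XX. AE \<omega> in M. X \<omega> \<le> Y \<omega>) \<and>
     (\<forall>Y'\<in>borel_measurable M. (\<forall>X\<in>XX. AE \<omega> in M. X \<omega> \<le> Y' \<omega>) \<longrightarrow> (AE \<omega> in M. Y \<omega> \<le> Y' \<omega>))"

definition emp_mean :: "(nat \<Rightarrow> nat) \<Rightarrow> (nat \<Rightarrow> nat \<Rightarrow> 'a \<Rightarrow> 'b) \<Rightarrow> nat \<Rightarrow> ('b \<Rightarrow> real) \<Rightarrow> 'a \<Rightarrow> real" where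
  "emp_mean Ms Zs n f \<omega> = (\<Sum>k=1..Ms n. f (Zs n k \<omega>)) / real (Ms n)"

end

(* Z is independent of the sigma-algebra G generated by the samples, so by the freezing lemma
   E[F(.,Z) | G](w) is the integral of F(w,.) against the law of Z, almost surely, for every
   G (x) Borel-measurable F.  Hence each member of the family on the left is a.s. bounded by the
   supremum on the right (take f = F(w)), and the constant choices F = f are admissible.
   That supremum is measurable and a.s. below every a.e. upper bound because it is already the
   supremum over a countable family: maxima of finitely many cones z |-> a - |z - c| with a
   rational and c in a countable dense set approximate every 1-Lipschitz f pointwise with linear
   growth, so the deviations along the family converge by dominated convergence. *)

theory Submission
  imports Defs
begin

lemma lipschitz_on_Max:
  fixes \<phi> :: "'i \<Rightarrow> 'a::metric_space \<Rightarrow> real"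
  assumes "finite A" "A \<noteq> {}" "\<And>a. a \<in> A \<Longrightarrow> C-lipschitz_on U (\<phi> a)"
  shows "C-lipschitz_on U (\<lambda>z. Max ((\<lambda>a. \<phi> a z) ` A))"
proof (rule lipschitz_onI)
  have le: "Max ((\<lambda>a. \<phi> a z) ` A) \<le> Max ((\<lambda>a. \<phi> a w) ` A) + C * dist z w"
    if "z \<in> U" "w \<in> U" for z w
  proof (subst Max_le_iff, safe)
    fix a assume "a \<in> A"
    have "\<phi> a z - \<phi> a w \<le> C * dist z w"
      using lipschitz_onD[OF assms(3)[OF \<open>a \<in> A\<close>] that] by (simp add: dist_real_def)
    moreover have "\<phi> a w \<le> Max ((\<lambda>a. \<phi> a w) ` A)" using assms \<open>a \<in> A\<close> by auto
    ultimately show "\<phi> a z \<le> Max ((\<lambda>a. \<phi> a w) ` A) + C * dist z w" by simp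
  qed (use assms in auto)
  fix z w assume "z \<in> U" "w \<in> U"
  then show "dist (Max ((\<lambda>a. \<phi> a z) ` A)) (Max ((\<lambda>a. \<phi> a w) ` A)) \<le> C * dist z w"
    using le[of z w] le[of w z] by (simp add: dist_real_def dist_commute abs_le_iff)
next
  obtain a where "a \<in> A" using assms(2) by blast
  then show "0 \<le> C" using assms(3) lipschitz_on_nonneg by blast
qed

lemma borel_measurable_lipschitz:
  "C-lipschitz_on UNIV f \<Longrightarrow> f \<in> borel_measurable borel"
  by (rule borel_measurable_continuous_onI[OF lipschitz_on_continuous_on])

lemma lipschitz_on_cone: "1-lipschitz_on U (\<lambda>z. a - dist z c)"
proof (rule lipschitz_onI)
  fix x y
  show "dist (a - dist x c) (a - dist y c) \<le> 1 * dist x y"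
    using dist_triangle[of x c y] dist_triangle[of y c x]
    by (simp add: dist_real_def dist_commute abs_le_iff)
qed simp

definition cone_envelopes :: "'a::metric_space set \<Rightarrow> ('a \<Rightarrow> real) set" where
  "cone_envelopes D = {\<lambda>z. Max ((\<lambda>(c, a). real_of_rat a - dist z c) ` S) | S.
     finite S \<and> S \<noteq> {} \<and> S \<subseteq> D \<times> UNIV}"

lemma countable_cone_envelopes: "countable D \<Longrightarrow> countable (cone_envelopes D)"
proof -
  assume "countable D"
  then have "countable {S. finite S \<and> S \<subseteq> D \<times> (UNIV :: rat set)}"
    by (intro countable_Collect_finite_subset countable_SIGMA) auto
  then have "countable {S. finite S \<and> S \<noteq> {} \<and> S \<subseteq> D \<times> (UNIV :: rat set)}"
    by (rule countable_subset[rotated]) auto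
  then show ?thesis
    unfolding cone_envelopes_def by (simp add: setcompr_eq_image)
qed

lemma cone_envelopes_nonempty: "D \<noteq> {} \<Longrightarrow> cone_envelopes D \<noteq> {}"
  unfolding cone_envelopes_def by blast

lemma lipschitz_on_cone_envelopes:
  "g \<in> cone_envelopes D \<Longrightarrow> 1-lipschitz_on U g"
  unfolding cone_envelopes_def
  by (auto intro!: lipschitz_on_Max simp: image_image split_beta' lipschitz_on_cone)

lemma Max_cones_bounds:
  fixes f :: "'a::metric_space \<Rightarrow> real"
  assumes f: "1-lipschitz_on UNIV f" and "finite I"
    and v: "\<And>i. i \<in> I \<Longrightarrow> \<bar>v i - f (e i)\<bar> \<le> \<delta>"
  shows "I \<noteq> {} \<Longrightarrow> Max ((\<lambda>i. v i - dist z (e i)) ` I) \<le> f z + \<delta>"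
    and "i \<in> I \<Longrightarrow> f z - 2 * dist z (e i) - \<delta> \<le> Max ((\<lambda>i. v i - dist z (e i)) ` I)"
proof -
  have f_dist: "\<bar>f x - f y\<bar> \<le> dist x y" for x y
    using lipschitz_onD[OF f, of x y] by (simp add: dist_real_def)
  show "I \<noteq> {} \<Longrightarrow> Max ((\<lambda>i. v i - dist z (e i)) ` I) \<le> f z + \<delta>"
  proof (rule Max.boundedI)
    fix x assume "x \<in> (\<lambda>i. v i - dist z (e i)) ` I"
    then obtain i where "i \<in> I" "x = v i - dist z (e i)" by blast
    then show "x \<le> f z + \<delta>" using v[of i] f_dist[of "e i" z] by (simp add: dist_commute)
  qed (use \<open>finite I\<close> in auto)
  assume "i \<in> I"
  then have "v i - dist z (e i) \<le> Max ((\<lambda>i. v i - dist z (e i)) ` I)"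
    using \<open>finite I\<close> by (intro Max_ge) auto
  then show "f z - 2 * dist z (e i) - \<delta> \<le> Max ((\<lambda>i. v i - dist z (e i)) ` I)"
    using v[OF \<open>i \<in> I\<close>] f_dist[of z "e i"] by simp
qed

lemma cone_envelopes_approx:
  fixes f :: "'a::metric_space \<Rightarrow> real"
  assumes D: "countable D" "D \<noteq> {}" "\<And>U. open U \<Longrightarrow> U \<noteq> {} \<Longrightarrow> \<exists>c\<in>D. c \<in> U"
    and f: "1-lipschitz_on UNIV f"
  obtains g c where "\<And>j. g j \<in> cone_envelopes D" "\<And>z. (\<lambda>j. g j z) \<longlonglongrightarrow> f z"
    "\<And>j z. \<bar>g j z - f z\<bar> \<le> 2 * dist z c + 1"
proof -
  define e where "e = from_nat_into D"
  define \<delta> :: "nat \<Rightarrow> real" where "\<delta> j = inverse (real (Suc j))" for j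
  have "\<exists>r::rat. \<bar>real_of_rat r - f (e i)\<bar> \<le> \<delta> j" for i j
  proof -
    obtain r where "f (e i) < real_of_rat r" "real_of_rat r < f (e i) + \<delta> j"
      using of_rat_dense[of "f (e i)" "f (e i) + \<delta> j"] by (auto simp: \<delta>_def)
    then show ?thesis by (intro exI[of _ r]) auto
  qed
  then obtain r where r: "\<And>i j. \<bar>real_of_rat (r i j) - f (e i)\<bar> \<le> \<delta> j" by metis
  define g where "g j z = Max ((\<lambda>i. real_of_rat (r i j) - dist z (e i)) ` {..j})" for j z
  have upper: "g j z \<le> f z + \<delta> j" for j z
    unfolding g_def using r by (intro Max_cones_bounds(1)[OF f]) auto
  have lower: "f z - 2 * dist z (e i) - \<delta> j \<le> g j z" if "i \<le> j" for i j z
    unfolding g_def using r that by (intro Max_cones_bounds(2)[OF f]) auto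
  have "g j \<in> cone_envelopes D" for j
  proof -
    have "(\<lambda>i. (e i, r i j)) ` {..j} \<subseteq> D \<times> UNIV"
      using range_from_nat_into_subset[OF D(2)] by (auto simp: e_def)
    then show ?thesis
      unfolding cone_envelopes_def g_def
      by (intro CollectI exI[of _ "(\<lambda>i. (e i, r i j)) ` {..j}"]) (auto simp: image_image)
  qed
  moreover have "(\<lambda>j. g j z) \<longlonglongrightarrow> f z" for z
  proof (rule LIMSEQ_I)
    fix \<epsilon> :: real assume "\<epsilon> > 0"
    then obtain c where "c \<in> D" "dist c z < \<epsilon> / 4"
      using D(3)[of "ball z (\<epsilon> / 4)"] by (auto simp: dist_commute)
    then obtain i where i: "dist (e i) z < \<epsilon> / 4"
      using from_nat_into_surj[OF D(1)] by (metis e_def)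
    obtain N where N: "\<delta> N < \<epsilon> / 4"
      using reals_Archimedean[of "\<epsilon> / 4"] \<open>\<epsilon> > 0\<close> by (auto simp: \<delta>_def)
    have "norm (g j z - f z) < \<epsilon>" if "max i N \<le> j" for j
    proof -
      have "\<delta> j \<le> \<delta> N" using that by (simp add: \<delta>_def le_imp_inverse_le)
      then show ?thesis using upper[of j z] lower[of i j z] that i N by (simp add: dist_commute)
    qed
    then show "\<exists>N. \<forall>j\<ge>N. norm (g j z - f z) < \<epsilon>" by blast
  qed
  moreover have "\<bar>g j z - f z\<bar> \<le> 2 * dist z (e 0) + 1" for j z
  proof -
    have "\<delta> j \<le> 1" by (simp add: \<delta>_def inverse_le_1_iff)
    then show ?thesis
      unfolding abs_le_iff using upper[of j z] lower[of 0 j z] zero_le_dist[of z "e 0"] by linarith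
  qed
  ultimately show thesis using that by blast
qed

lemma cSUP_eq_cSUP_of_tendsto:
  fixes \<phi> :: "'a \<Rightarrow> real"
  assumes "B \<subseteq> A" "B \<noteq> {}" "bdd_above (\<phi> ` A)"
    and approx: "\<And>a. a \<in> A \<Longrightarrow> \<exists>g. (\<forall>j. g j \<in> B) \<and> (\<lambda>j. \<phi> (g j)) \<longlonglongrightarrow> \<phi> a"
  shows "(SUP a\<in>A. \<phi> a) = (SUP b\<in>B. \<phi> b)"
proof (rule antisym)
  have bdd_B: "bdd_above (\<phi> ` B)" by (rule bdd_above_mono[OF assms(3) image_mono[OF assms(1)]])
  show "(SUP a\<in>A. \<phi> a) \<le> (SUP b\<in>B. \<phi> b)"
  proof (rule cSUP_least)
    show "A \<noteq> {}" using assms(1,2) by blast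
    fix a assume "a \<in> A"
    then obtain g where "\<forall>j. g j \<in> B" "(\<lambda>j. \<phi> (g j)) \<longlonglongrightarrow> \<phi> a" using approx by blast
    then show "\<phi> a \<le> (SUP b\<in>B. \<phi> b)"
      by (intro LIMSEQ_le_const2[of "\<lambda>j. \<phi> (g j)"]) (auto intro: cSUP_upper[OF _ bdd_B])
  qed
  show "(SUP b\<in>B. \<phi> b) \<le> (SUP a\<in>A. \<phi> a)"
    using assms by (intro cSUP_subset_mono) auto
qed

lemma is_ess_sup_SUP_countable:
  fixes \<Phi> :: "'f \<Rightarrow> 'a \<Rightarrow> real"
  assumes "countable D" "D \<noteq> {}" "D \<subseteq> L"
    and bdd: "\<And>\<omega>. bdd_above ((\<lambda>f. \<Phi> f \<omega>) ` L)"
    and SUP_eq: "\<And>\<omega>. (SUP f\<in>L. \<Phi> f \<omega>) = (SUP f\<in>D. \<Phi> f \<omega>)"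
    and meas: "\<And>f. f \<in> D \<Longrightarrow> \<Phi> f \<in> borel_measurable M"
    and dominated: "\<And>X. X \<in> XX \<Longrightarrow> AE \<omega> in M. \<exists>f\<in>L. X \<omega> \<le> \<Phi> f \<omega>"
    and attained: "\<And>f. f \<in> D \<Longrightarrow> \<exists>X\<in>XX. AE \<omega> in M. \<Phi> f \<omega> \<le> X \<omega>"
  shows "is_ess_sup M XX (\<lambda>\<omega>. SUP f\<in>L. \<Phi> f \<omega>)"
  unfolding is_ess_sup_def
proof (intro conjI ballI impI)
  have "bdd_above ((\<lambda>f. \<Phi> f \<omega>) ` D)" for \<omega>
    by (rule bdd_above_mono[OF bdd image_mono[OF \<open>D \<subseteq> L\<close>]])
  then show "(\<lambda>\<omega>. SUP f\<in>L. \<Phi> f \<omega>) \<in> borel_measurable M"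
    unfolding SUP_eq using \<open>countable D\<close> meas by (intro borel_measurable_cSUP) auto
  fix X assume "X \<in> XX"
  show "AE \<omega> in M. X \<omega> \<le> (SUP f\<in>L. \<Phi> f \<omega>)"
    using dominated[OF \<open>X \<in> XX\<close>] by eventually_elim (auto intro: order_trans cSUP_upper[OF _ bdd])
next
  fix Y assume "Y \<in> borel_measurable M" and upper: "\<forall>X\<in>XX. AE \<omega> in M. X \<omega> \<le> Y \<omega>"
  have "AE \<omega> in M. \<Phi> f \<omega> \<le> Y \<omega>" if f: "f \<in> D" for f
  proof -
    obtain X where "X \<in> XX" "AE \<omega> in M. \<Phi> f \<omega> \<le> X \<omega>" using attained[OF f] by blast
    with upper show ?thesis by (auto elim: AE_mp)
  qed
  then have "AE \<omega> in M. \<forall>f\<in>D. \<Phi> f \<omega> \<le> Y \<omega>"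
    by (rule AE_ball_countable'[OF _ \<open>countable D\<close>])
  then show "AE \<omega> in M. (SUP f\<in>L. \<Phi> f \<omega>) \<le> Y \<omega>"
    by eventually_elim (simp add: SUP_eq cSUP_least[OF \<open>D \<noteq> {}\<close>])
qed

lemma abs_diff_emp_mean_le:
  assumes "Ms n > 0" and "\<And>k. k \<in> {1..Ms n} \<Longrightarrow> \<bar>c - f (Zs n k \<omega>)\<bar> \<le> e + g (Zs n k \<omega>)"
  shows "\<bar>c - emp_mean Ms Zs n f \<omega>\<bar> \<le> e + emp_mean Ms Zs n g \<omega>"
proof -
  have "\<bar>c - emp_mean Ms Zs n f \<omega>\<bar> = \<bar>\<Sum>k=1..Ms n. c - f (Zs n k \<omega>)\<bar> / real (Ms n)"
    using assms(1) by (simp add: emp_mean_def sum_subtractf field_simps)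
  also have "\<dots> \<le> (\<Sum>k=1..Ms n. e + g (Zs n k \<omega>)) / real (Ms n)"
    using assms by (intro divide_right_mono order_trans[OF sum_abs sum_mono]) auto
  also have "\<dots> = e + emp_mean Ms Zs n g \<omega>"
    using assms(1) by (simp add: emp_mean_def sum.distrib field_simps)
  finally show ?thesis .
qed

lemma tendsto_emp_mean:
  assumes "\<And>z. (\<lambda>j. g j z) \<longlonglongrightarrow> f z"
  shows "(\<lambda>j. emp_mean Ms Zs n (g j) \<omega>) \<longlonglongrightarrow> emp_mean Ms Zs n f \<omega>"
  unfolding emp_mean_def divide_inverse by (intro tendsto_mult_right tendsto_sum assms)

lemma borel_measurable_emp_mean:
  assumes "\<And>k. k \<in> {1..Ms n} \<Longrightarrow> Zs n k \<in> measurable M N" and "f \<in> borel_measurable N"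
  shows "emp_mean Ms Zs n f \<in> borel_measurable M"
  unfolding emp_mean_def[abs_def] using assms by measurable

context prob_space
begin

lemma indep_vars_generated_subalgebra:
  assumes indep: "indep_vars M' X I" and "i \<in> I" "J \<subseteq> I - {i}"
    and G: "G = sigma (space M) (\<Union>j\<in>J. {X j -` A \<inter> space M | A. A \<in> sets (M' j)})"
  shows "subalgebra M G"
    and "indep_set (sets G) {X i -` B \<inter> space M | B. B \<in> sets (M' i)}"
proof -
  define E where "E j = {X j -` A \<inter> space M | A. A \<in> sets (M' j)}" for j
  have indep_E: "indep_sets E I" and E_events: "\<And>j. j \<in> I \<Longrightarrow> E j \<subseteq> events"
    using indep unfolding indep_vars_def2 E_def by (auto simp: measurable_sets)
  have gen: "(\<Union>j\<in>J. E j) \<subseteq> Pow (space M)" unfolding E_def by auto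
  have sets_G: "sets G = sigma_sets (space M) (\<Union>j\<in>J. E j)"
    unfolding G E_def[symmetric] using gen by simp
  show "subalgebra M G"
  proof (rule subalgebra_def[THEN iffD2], intro conjI)
    show "space G = space M" unfolding G E_def[symmetric] using gen by simp
    show "sets G \<subseteq> sets M"
      unfolding sets_G using E_events assms(3) by (intro sets.sigma_sets_subset) auto
  qed
  have "indep_sets (\<lambda>b. sigma_sets (space M) (\<Union>j\<in>case_bool J {i} b. E j)) UNIV"
  proof (rule indep_sets_collect_sigma)
    show "indep_sets E (\<Union>b. case_bool J {i} b)"
      using assms(2,3) by (intro indep_sets_mono_index[OF _ indep_E]) (auto split: bool.splits)
    show "Int_stable (E j)" for j
    proof (rule Int_stableI)
      fix a b assume "a \<in> E j" "b \<in> E j"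
      then obtain A B where "A \<in> sets (M' j)" "B \<in> sets (M' j)"
        and "a = X j -` A \<inter> space M" "b = X j -` B \<inter> space M" unfolding E_def by auto
      then show "a \<inter> b \<in> E j" unfolding E_def by (intro CollectI exI[of _ "A \<inter> B"]) auto
    qed
    show "disjoint_family (case_bool J {i})"
      using assms(3) unfolding disjoint_family_on_def by (auto split: bool.split)
  qed
  then show "indep_set (sets G) (E i)"
    unfolding indep_set_def
    by (rule indep_sets_mono_sets) (auto simp: sets_G split: bool.split)
qed

lemma distr_Pair_eq_pair_measure_indep:
  assumes sub: "subalgebra M G" and Z: "Z \<in> measurable M N"
    and indep: "indep_set (sets G) {Z -` B \<inter> space M | B. B \<in> sets N}"
  shows "distr M (G \<Otimes>\<^sub>M N) (\<lambda>\<omega>. (\<omega>, Z \<omega>)) = restr_to_subalg M G \<Otimes>\<^sub>M distr M N Z"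
proof (rule pair_measure_eqI[symmetric])
  show "sigma_finite_measure (restr_to_subalg M G)"
    using prob_space_restr_to_subalg[OF sub prob_space_axioms] by (rule prob_space_imp_sigma_finite)
  show "sigma_finite_measure (distr M N Z)"
    using prob_space_distr[OF Z] by (rule prob_space_imp_sigma_finite)
  show "sets (restr_to_subalg M G \<Otimes>\<^sub>M distr M N Z) = sets (distr M (G \<Otimes>\<^sub>M N) (\<lambda>\<omega>. (\<omega>, Z \<omega>)))"
    using sets_restr_to_subalg[OF sub] by (simp cong: sets_pair_measure_cong)
  fix A B assume "A \<in> sets (restr_to_subalg M G)" "B \<in> sets (distr M N Z)"
  then have A: "A \<in> sets G" and B: "B \<in> sets N" using sets_restr_to_subalg[OF sub] by auto
  have A_events: "A \<in> events" using A sub by (auto simp: subalgebra_def)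
  have pair: "(\<lambda>\<omega>. (\<omega>, Z \<omega>)) \<in> measurable M (G \<Otimes>\<^sub>M N)"
    by (rule measurable_Pair[OF measurable_from_subalg[OF sub measurable_id] Z])
  have "emeasure (distr M (G \<Otimes>\<^sub>M N) (\<lambda>\<omega>. (\<omega>, Z \<omega>))) (A \<times> B) = emeasure M (A \<inter> (Z -` B \<inter> space M))"
    using A B sets.sets_into_space[OF A_events]
    by (subst emeasure_distr[OF pair]) (auto intro!: arg_cong[where f="emeasure M"])
  also have "\<dots> = ennreal (prob A * prob (Z -` B \<inter> space M))"
    using indep_setD[OF indep A] B by (auto simp: emeasure_eq_measure)
  also have "\<dots> = emeasure (restr_to_subalg M G) A * emeasure (distr M N Z) B"
    using A A_events B Z
    by (simp add: emeasure_restr_to_subalg[OF sub] emeasure_distr emeasure_eq_measure ennreal_mult)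
  finally show "emeasure (restr_to_subalg M G) A * emeasure (distr M N Z) B =
    emeasure (distr M (G \<Otimes>\<^sub>M N) (\<lambda>\<omega>. (\<omega>, Z \<omega>))) (A \<times> B)" by simp
qed

lemma nn_integral_freeze:
  assumes sub: "subalgebra M G" and Z: "Z \<in> measurable M N"
    and indep: "indep_set (sets G) {Z -` B \<inter> space M | B. B \<in> sets N}"
    and h: "h \<in> borel_measurable (G \<Otimes>\<^sub>M N)"
  shows "(\<integral>\<^sup>+\<omega>. h (\<omega>, Z \<omega>) \<partial>M) = (\<integral>\<^sup>+\<omega>. (\<integral>\<^sup>+z. h (\<omega>, z) \<partial>distr M N Z) \<partial>M)"
proof -
  have sf: "sigma_finite_measure (distr M N Z)"
    using prob_space_distr[OF Z] by (rule prob_space_imp_sigma_finite)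
  have h': "h \<in> borel_measurable (restr_to_subalg M G \<Otimes>\<^sub>M distr M N Z)"
    "h \<in> borel_measurable (G \<Otimes>\<^sub>M distr M N Z)"
    using h sets_restr_to_subalg[OF sub] by (simp_all cong: sets_pair_measure_cong measurable_cong_sets)
  have pair: "(\<lambda>\<omega>. (\<omega>, Z \<omega>)) \<in> measurable M (G \<Otimes>\<^sub>M N)"
    by (rule measurable_Pair[OF measurable_from_subalg[OF sub measurable_id] Z])
  have "(\<integral>\<^sup>+\<omega>. h (\<omega>, Z \<omega>) \<partial>M) = integral\<^sup>N (distr M (G \<Otimes>\<^sub>M N) (\<lambda>\<omega>. (\<omega>, Z \<omega>))) h"
    using h by (simp add: nn_integral_distr[OF pair])
  also have "\<dots> = integral\<^sup>N (restr_to_subalg M G \<Otimes>\<^sub>M distr M N Z) h"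
    by (simp add: distr_Pair_eq_pair_measure_indep[OF sub Z indep])
  also have "\<dots> = (\<integral>\<^sup>+\<omega>. (\<integral>\<^sup>+z. h (\<omega>, z) \<partial>distr M N Z) \<partial>restr_to_subalg M G)"
    by (rule sigma_finite_measure.nn_integral_fst[OF sf h'(1), symmetric])
  also have "\<dots> = (\<integral>\<^sup>+\<omega>. (\<integral>\<^sup>+z. h (\<omega>, z) \<partial>distr M N Z) \<partial>M)"
    by (rule nn_integral_subalgebra2[OF sub sigma_finite_measure.borel_measurable_nn_integral_fst[OF sf h'(2)]])
  finally show ?thesis .
qed

lemma nn_cond_exp_freeze:
  assumes sub: "subalgebra M G" and Z: "Z \<in> measurable M N"
    and indep: "indep_set (sets G) {Z -` B \<inter> space M | B. B \<in> sets N}"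
    and h: "h \<in> borel_measurable (G \<Otimes>\<^sub>M N)"
  shows "AE \<omega> in M. nn_cond_exp M G (\<lambda>\<omega>. h (\<omega>, Z \<omega>)) \<omega> = (\<integral>\<^sup>+z. h (\<omega>, z) \<partial>distr M N Z)"
proof -
  have sfs: "sigma_finite_subalgebra M G"
    using sub prob_space_imp_sigma_finite[OF prob_space_restr_to_subalg[OF sub prob_space_axioms]]
    by (rule sigma_finite_subalgebra.intro)
  have integrals: "(\<integral>\<^sup>+\<omega>. h (\<omega>, Z \<omega>) * indicator A \<omega> \<partial>M)
      = (\<integral>\<^sup>+\<omega>. (\<integral>\<^sup>+z. h (\<omega>, z) \<partial>distr M N Z) * indicator A \<omega> \<partial>M)" if A: "A \<in> sets G" for A
  proof -
    have "(\<lambda>p. h p * indicator A (fst p)) \<in> borel_measurable (G \<Otimes>\<^sub>M N)"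
      using h A by measurable
    from nn_integral_freeze[OF sub Z indep this]
    have "(\<integral>\<^sup>+\<omega>. h (\<omega>, Z \<omega>) * indicator A \<omega> \<partial>M)
        = (\<integral>\<^sup>+\<omega>. (\<integral>\<^sup>+z. h (\<omega>, z) * indicator A \<omega> \<partial>distr M N Z) \<partial>M)" by simp
    also have "\<dots> = (\<integral>\<^sup>+\<omega>. (\<integral>\<^sup>+z. h (\<omega>, z) \<partial>distr M N Z) * indicator A \<omega> \<partial>M)"
      by (rule nn_integral_cong) (simp split: split_indicator)
    finally show ?thesis .
  qed
  have "(\<lambda>\<omega>. h (\<omega>, Z \<omega>)) \<in> borel_measurable M"
    using measurable_Pair[OF measurable_from_subalg[OF sub measurable_id] Z] h by measurable
  moreover have "(\<lambda>\<omega>. \<integral>\<^sup>+z. h (\<omega>, z) \<partial>distr M N Z) \<in> borel_measurable G"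
    using h prob_space_imp_sigma_finite[OF prob_space_distr[OF Z]]
    by (intro sigma_finite_measure.borel_measurable_nn_integral_fst)
      (simp_all cong: sets_pair_measure_cong measurable_cong_sets)
  ultimately have "AE \<omega> in M. (\<integral>\<^sup>+z. h (\<omega>, z) \<partial>distr M N Z) = nn_cond_exp M G (\<lambda>\<omega>. h (\<omega>, Z \<omega>)) \<omega>"
    using sigma_finite_subalgebra.nn_cond_exp_charact[OF sfs integrals] by blast
  then show ?thesis by (auto elim: AE_mp)
qed

lemma real_cond_exp_freeze:
  fixes h :: "'a \<times> 'b \<Rightarrow> real"
  assumes sub: "subalgebra M G" and Z: "Z \<in> measurable M N"
    and indep: "indep_set (sets G) {Z -` B \<inter> space M | B. B \<in> sets N}"
    and h: "h \<in> borel_measurable (G \<Otimes>\<^sub>M N)"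
  shows "AE \<omega> in M. integrable (distr M N Z) (\<lambda>z. h (\<omega>, z)) \<longrightarrow>
    real_cond_exp M G (\<lambda>\<omega>. h (\<omega>, Z \<omega>)) \<omega> = (\<integral>z. h (\<omega>, z) \<partial>distr M N Z)"
  using nn_cond_exp_freeze[OF sub Z indep, of "\<lambda>p. ennreal (h p)"]
    nn_cond_exp_freeze[OF sub Z indep, of "\<lambda>p. ennreal (- h p)"] h
  by (auto simp: real_cond_exp_def real_lebesgue_integral_def elim!: AE_mp[OF AE_conjI])

lemma integrable_lipschitz_comp:
  fixes Z :: "'a \<Rightarrow> 'b::real_normed_vector" and f :: "'b \<Rightarrow> real"
  assumes "integrable M (\<lambda>\<omega>. norm (Z \<omega>))" "Z \<in> borel_measurable M" "C-lipschitz_on UNIV f"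
  shows "integrable M (\<lambda>\<omega>. f (Z \<omega>))"
proof -
  have bound: "\<bar>f (Z \<omega>) - f 0\<bar> \<le> C * norm (Z \<omega>)" for \<omega>
    using lipschitz_onD[OF assms(3), of "Z \<omega>" 0] by (simp add: dist_real_def)
  have "integrable M (\<lambda>\<omega>. \<bar>f 0\<bar> + C * norm (Z \<omega>))" using assms(1) by simp
  moreover have "(\<lambda>\<omega>. f (Z \<omega>)) \<in> borel_measurable M"
    by (rule measurable_compose[OF assms(2) borel_measurable_lipschitz[OF assms(3)]])
  moreover have "AE \<omega> in M. norm (f (Z \<omega>)) \<le> norm (\<bar>f 0\<bar> + C * norm (Z \<omega>))"
    using bound by (intro AE_I2) (smt (verit) real_norm_def)
  ultimately show ?thesis by (rule Bochner_Integration.integrable_bound)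
qed

lemma abs_expectation_lipschitz_diff_le:
  fixes Z :: "'a \<Rightarrow> 'b::real_normed_vector" and f :: "'b \<Rightarrow> real"
  assumes intZ: "integrable M (\<lambda>\<omega>. norm (Z \<omega>))" and Z: "Z \<in> borel_measurable M"
    and f: "1-lipschitz_on UNIV f"
  shows "\<bar>expectation (\<lambda>\<omega>. f (Z \<omega>)) - f x\<bar> \<le> expectation (\<lambda>\<omega>. norm (Z \<omega>)) + norm x"
proof -
  have int_f: "integrable M (\<lambda>\<omega>. f (Z \<omega>))" by (rule integrable_lipschitz_comp[OF intZ Z f])
  have "\<bar>f (Z \<omega>) - f x\<bar> \<le> norm (Z \<omega>) + norm x" for \<omega>
    using lipschitz_onD[OF f, of "Z \<omega>" x] norm_triangle_ineq4[of "Z \<omega>" x]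
    by (simp add: dist_real_def dist_norm)
  then have "\<bar>expectation (\<lambda>\<omega>. f (Z \<omega>) - f x)\<bar> \<le> expectation (\<lambda>\<omega>. norm (Z \<omega>) + norm x)"
    using int_f intZ by (intro order_trans[OF integral_abs_bound] integral_mono) auto
  then show ?thesis using int_f intZ by (simp add: prob_space)
qed

lemma tendsto_expectation_linear_growth:
  fixes Z :: "'a \<Rightarrow> 'b::real_normed_vector"
  assumes intZ: "integrable M (\<lambda>\<omega>. norm (Z \<omega>))" and Z: "Z \<in> borel_measurable M"
    and g: "\<And>j. g j \<in> borel_measurable borel" and lim: "\<And>z. (\<lambda>j. g j z) \<longlonglongrightarrow> f z"
    and growth: "\<And>j z. \<bar>g j z\<bar> \<le> a + b * norm z"
  shows "(\<lambda>j. expectation (\<lambda>\<omega>. g j (Z \<omega>))) \<longlonglongrightarrow> expectation (\<lambda>\<omega>. f (Z \<omega>))"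
proof (rule integral_dominated_convergence[where w="\<lambda>\<omega>. a + b * norm (Z \<omega>)"])
  show g_Z: "(\<lambda>\<omega>. g j (Z \<omega>)) \<in> borel_measurable M" for j using g Z by measurable
  show "(\<lambda>\<omega>. f (Z \<omega>)) \<in> borel_measurable M"
    by (rule borel_measurable_LIMSEQ_real[OF lim g_Z])
  show "integrable M (\<lambda>\<omega>. a + b * norm (Z \<omega>))" using intZ by simp
  show "AE \<omega> in M. (\<lambda>j. g j (Z \<omega>)) \<longlonglongrightarrow> f (Z \<omega>)" using lim by simp
  show "AE \<omega> in M. norm (g j (Z \<omega>)) \<le> a + b * norm (Z \<omega>)" for j using growth by simp
qed

lemma bdd_above_lipschitz_deviation:
  fixes Z :: "'a \<Rightarrow> 'b::real_normed_vector"
  assumes "integrable M (\<lambda>\<omega>. norm (Z \<omega>))" "Z \<in> borel_measurable M" "Ms n > 0"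
  shows "bdd_above ((\<lambda>f. \<bar>expectation (\<lambda>\<omega>'. f (Z \<omega>')) - emp_mean Ms Zs n f \<omega>\<bar>) ` {f. 1-lipschitz_on UNIV f})"
proof (rule bdd_aboveI, clarify)
  fix f :: "'b \<Rightarrow> real" assume "1-lipschitz_on UNIV f"
  then show "\<bar>expectation (\<lambda>\<omega>'. f (Z \<omega>')) - emp_mean Ms Zs n f \<omega>\<bar>
    \<le> expectation (\<lambda>\<omega>. norm (Z \<omega>)) + emp_mean Ms Zs n norm \<omega>"
    by (intro abs_diff_emp_mean_le[where Ms=Ms and n=n and Zs=Zs, OF assms(3)]
      abs_expectation_lipschitz_diff_le[OF assms(1,2)])
qed

lemma SUP_lipschitz_deviation_eq_cone_envelopes:
  fixes Z :: "'a \<Rightarrow> 'b::real_normed_vector"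
  assumes intZ: "integrable M (\<lambda>\<omega>. norm (Z \<omega>))" and Z: "Z \<in> borel_measurable M"
    and "Ms n > 0"
    and D: "countable D" "D \<noteq> {}" "\<And>U. open U \<Longrightarrow> U \<noteq> {} \<Longrightarrow> \<exists>c\<in>D. c \<in> U"
  shows "(SUP f\<in>{f. 1-lipschitz_on UNIV f}. \<bar>expectation (\<lambda>\<omega>'. f (Z \<omega>')) - emp_mean Ms Zs n f \<omega>\<bar>)
    = (SUP f\<in>cone_envelopes D. \<bar>expectation (\<lambda>\<omega>'. f (Z \<omega>')) - emp_mean Ms Zs n f \<omega>\<bar>)"
proof (rule cSUP_eq_cSUP_of_tendsto)
  show "cone_envelopes D \<subseteq> {f. 1-lipschitz_on UNIV f}" using lipschitz_on_cone_envelopes by blast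
  show "cone_envelopes D \<noteq> {}" using D(2) by (rule cone_envelopes_nonempty)
  show "bdd_above ((\<lambda>f. \<bar>expectation (\<lambda>\<omega>'. f (Z \<omega>')) - emp_mean Ms Zs n f \<omega>\<bar>) ` {f. 1-lipschitz_on UNIV f})"
    using \<open>Ms n > 0\<close> by (rule bdd_above_lipschitz_deviation[OF intZ Z])
  fix f :: "'b \<Rightarrow> real" assume "f \<in> {f. 1-lipschitz_on UNIV f}"
  then have f: "1-lipschitz_on UNIV f" by simp
  obtain g c where g: "\<And>j. g j \<in> cone_envelopes D" and lim: "\<And>z. (\<lambda>j. g j z) \<longlonglongrightarrow> f z"
    and close: "\<And>j z. \<bar>g j z - f z\<bar> \<le> 2 * dist z c + 1"
    using cone_envelopes_approx[OF D f] by blast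
  have "\<bar>g j z\<bar> \<le> (\<bar>f 0\<bar> + 2 * norm c + 1) + 3 * norm z" for j z
  proof -
    have "dist z c \<le> norm z + norm c" by (simp add: dist_norm norm_triangle_ineq4)
    moreover have "\<bar>f z - f 0\<bar> \<le> norm z" using lipschitz_onD[OF f, of z 0] by (simp add: dist_real_def)
    ultimately show ?thesis using close[of j z] by linarith
  qed
  moreover have "g j \<in> borel_measurable borel" for j
    by (rule borel_measurable_lipschitz[OF lipschitz_on_cone_envelopes[OF g]])
  ultimately have "(\<lambda>j. expectation (\<lambda>\<omega>. g j (Z \<omega>))) \<longlonglongrightarrow> expectation (\<lambda>\<omega>. f (Z \<omega>))"
    using lim by (intro tendsto_expectation_linear_growth[OF intZ Z])
  then have dev: "(\<lambda>j. \<bar>expectation (\<lambda>\<omega>'. g j (Z \<omega>')) - emp_mean Ms Zs n (g j) \<omega>\<bar>)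
      \<longlonglongrightarrow> \<bar>expectation (\<lambda>\<omega>'. f (Z \<omega>')) - emp_mean Ms Zs n f \<omega>\<bar>"
    using lim by (intro tendsto_rabs tendsto_diff tendsto_emp_mean)
  show "\<exists>g. (\<forall>j. g j \<in> cone_envelopes D) \<and> (\<lambda>j. \<bar>expectation (\<lambda>\<omega>'. g j (Z \<omega>')) -
      emp_mean Ms Zs n (g j) \<omega>\<bar>) \<longlonglongrightarrow> \<bar>expectation (\<lambda>\<omega>'. f (Z \<omega>')) - emp_mean Ms Zs n f \<omega>\<bar>"
    by (intro exI[of _ g] conjI allI g dev)
qed

lemma real_cond_exp_freeze_lipschitz:
  fixes Z :: "'a \<Rightarrow> 'b::real_normed_vector" and F :: "'a \<Rightarrow> 'b \<Rightarrow> real"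
  assumes sub: "subalgebra M G" and Z: "Z \<in> borel_measurable M"
    and indep: "indep_set (sets G) {Z -` B \<inter> space M | B. B \<in> sets borel}"
    and intZ: "integrable M (\<lambda>\<omega>. norm (Z \<omega>))"
    and F: "(\<lambda>(\<omega>, z). F \<omega> z) \<in> borel_measurable (G \<Otimes>\<^sub>M borel)"
  shows "AE \<omega> in M. C-lipschitz_on UNIV (F \<omega>) \<longrightarrow>
    real_cond_exp M G (\<lambda>\<omega>'. F \<omega>' (Z \<omega>')) \<omega> = expectation (\<lambda>\<omega>'. F \<omega> (Z \<omega>'))"
  using real_cond_exp_freeze[OF sub Z indep F]
proof eventually_elim
  case (elim \<omega>)
  show ?case
  proof
    assume L: "C-lipschitz_on UNIV (F \<omega>)"
    have F\<omega>: "F \<omega> \<in> borel_measurable borel"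
      by (rule borel_measurable_lipschitz[OF L])
    have "integrable (distr M borel Z) (F \<omega>)"
      using integrable_lipschitz_comp[OF intZ Z L] by (simp add: integrable_distr_eq[OF Z F\<omega>])
    with elim show "real_cond_exp M G (\<lambda>\<omega>'. F \<omega>' (Z \<omega>')) \<omega> = expectation (\<lambda>\<omega>'. F \<omega> (Z \<omega>'))"
      by (simp add: integral_distr[OF Z F\<omega>])
  qed
qed

lemma is_ess_sup_lipschitz_deviation:
  fixes Z :: "'a \<Rightarrow> 'b::{real_normed_vector, second_countable_topology}"
  assumes sub: "subalgebra M G" and Z: "Z \<in> borel_measurable M"
    and indep: "indep_set (sets G) {Z -` B \<inter> space M | B. B \<in> sets borel}"
    and intZ: "integrable M (\<lambda>\<omega>. norm (Z \<omega>))"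
    and Ms: "Ms n > 0" and Zs: "\<And>k. k \<in> {1..Ms n} \<Longrightarrow> Zs n k \<in> borel_measurable M"
  shows "is_ess_sup M
    {(\<lambda>\<omega>. \<bar>real_cond_exp M G (\<lambda>\<omega>'. F \<omega>' (Z \<omega>')) \<omega> - emp_mean Ms Zs n (F \<omega>) \<omega>\<bar>) | F.
       (\<lambda>(\<omega>, z). F \<omega> z) \<in> borel_measurable (G \<Otimes>\<^sub>M borel) \<and> (AE \<omega> in M. 1-lipschitz_on UNIV (F \<omega>))}
    (\<lambda>\<omega>. SUP f\<in>{f. 1-lipschitz_on UNIV f}. \<bar>expectation (\<lambda>\<omega>'. f (Z \<omega>')) - emp_mean Ms Zs n f \<omega>\<bar>)"
    (is "is_ess_sup M ?XX _")
proof -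
  obtain D :: "'b set" where D: "countable D" "\<And>U. open U \<Longrightarrow> U \<noteq> {} \<Longrightarrow> \<exists>c\<in>D. c \<in> U"
    by (rule countable_dense_setE) blast
  have "D \<noteq> {}" using D(2)[of UNIV] by auto
  define \<Phi> where "\<Phi> f \<omega> = \<bar>expectation (\<lambda>\<omega>'. f (Z \<omega>')) - emp_mean Ms Zs n f \<omega>\<bar>" for f \<omega>
  note freeze = real_cond_exp_freeze_lipschitz[OF sub Z indep intZ, where C=1]
  have "is_ess_sup M ?XX (\<lambda>\<omega>. SUP f\<in>{f. 1-lipschitz_on UNIV f}. \<Phi> f \<omega>)"
  proof (rule is_ess_sup_SUP_countable[where D="cone_envelopes D"])
    show "countable (cone_envelopes D)" using D(1) by (rule countable_cone_envelopes)
    show "cone_envelopes D \<noteq> {}" using \<open>D \<noteq> {}\<close> by (rule cone_envelopes_nonempty)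
    show "cone_envelopes D \<subseteq> {f. 1-lipschitz_on UNIV f}" using lipschitz_on_cone_envelopes by blast
    show "bdd_above ((\<lambda>f. \<Phi> f \<omega>) ` {f. 1-lipschitz_on UNIV f})" for \<omega>
      unfolding \<Phi>_def using Ms by (rule bdd_above_lipschitz_deviation[OF intZ Z])
    show "(SUP f\<in>{f. 1-lipschitz_on UNIV f}. \<Phi> f \<omega>) = (SUP f\<in>cone_envelopes D. \<Phi> f \<omega>)" for \<omega>
      unfolding \<Phi>_def using Ms D(1) \<open>D \<noteq> {}\<close> D(2)
      by (rule SUP_lipschitz_deviation_eq_cone_envelopes[OF intZ Z])
  next
    fix f assume "f \<in> cone_envelopes D"
    then have f: "f \<in> borel_measurable borel" "1-lipschitz_on UNIV f"
      by (auto intro: borel_measurable_lipschitz lipschitz_on_cone_envelopes)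
    then show "\<Phi> f \<in> borel_measurable M"
      unfolding \<Phi>_def using borel_measurable_emp_mean[where Zs=Zs, OF Zs] by measurable
    have meas: "(\<lambda>(\<omega>, z). f z) \<in> borel_measurable (G \<Otimes>\<^sub>M borel)" using f(1) by measurable
    have "AE \<omega> in M. \<Phi> f \<omega> \<le> \<bar>real_cond_exp M G (\<lambda>\<omega>'. f (Z \<omega>')) \<omega> - emp_mean Ms Zs n f \<omega>\<bar>"
      using freeze[where F="\<lambda>_. f", OF meas] by eventually_elim (simp add: \<Phi>_def f(2))
    moreover have "(\<lambda>\<omega>. \<bar>real_cond_exp M G (\<lambda>\<omega>'. f (Z \<omega>')) \<omega> - emp_mean Ms Zs n f \<omega>\<bar>) \<in> ?XX"
      using meas f(2) by (intro CollectI exI[of _ "\<lambda>_. f"]) simp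
    ultimately show "\<exists>X\<in>?XX. AE \<omega> in M. \<Phi> f \<omega> \<le> X \<omega>" by (rule bexI)
  next
    fix X assume "X \<in> ?XX"
    then obtain F where X: "X = (\<lambda>\<omega>. \<bar>real_cond_exp M G (\<lambda>\<omega>'. F \<omega>' (Z \<omega>')) \<omega> - emp_mean Ms Zs n (F \<omega>) \<omega>\<bar>)"
      and F: "(\<lambda>(\<omega>, z). F \<omega> z) \<in> borel_measurable (G \<Otimes>\<^sub>M borel)" "AE \<omega> in M. 1-lipschitz_on UNIV (F \<omega>)"
      by blast
    show "AE \<omega> in M. \<exists>f\<in>{f. 1-lipschitz_on UNIV f}. X \<omega> \<le> \<Phi> f \<omega>"
      using freeze[OF F(1)] F(2) by eventually_elim (auto simp: X \<Phi>_def)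
  qed
  then show ?thesis by (simp add: \<Phi>_def)
qed

end

theorem lemma2:
  fixes P :: "'a measure" and Z :: "'a \<Rightarrow> 'b::euclidean_space"
    and Zs :: "nat \<Rightarrow> nat \<Rightarrow> 'a \<Rightarrow> 'b" and Ms :: "nat \<Rightarrow> nat"
    and \<nu> :: "'b measure" and n :: nat and G :: "'a measure"
  assumes "prob_space P"
    and "\<forall>m\<ge>1. Ms m > 0"
    and "distr P borel Z = \<nu>"
    and "\<forall>m\<ge>1. \<forall>k\<in>{1..Ms m}. distr P borel (Zs m k) = \<nu>"
    and "prob_space.indep_vars P (\<lambda>_. borel)
           (\<lambda>i. case i of None \<Rightarrow> Z | Some (m, k) \<Rightarrow> Zs m k)
           ({None} \<union> Some ` {(m, k). 1 \<le> m \<and> 1 \<le> k \<and> k \<le> Ms m})"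
    and "integrable \<nu> norm"
    and "n \<ge> 1"
    and "G = sigma (space P)
           (\<Union>(m, k)\<in>{(m, k). 1 \<le> m \<and> 1 \<le> k \<and> k \<le> Ms m}.
              {Zs m k -` A \<inter> space P | A. A \<in> sets borel})"
  shows "is_ess_sup P
           {(\<lambda>\<omega>. \<bar>real_cond_exp P G (\<lambda>\<omega>'. F \<omega>' (Z \<omega>')) \<omega> - emp_mean Ms Zs n (F \<omega>) \<omega>\<bar>) | F.
              (\<lambda>(\<omega>, z). F \<omega> z) \<in> borel_measurable (G \<Otimes>\<^sub>M borel) \<and>
              (AE \<omega> in P. lipschitz_on 1 UNIV (F \<omega>))}
           (\<lambda>\<omega>. SUP f\<in>{f :: 'b \<Rightarrow> real. lipschitz_on 1 UNIV f}.
              \<bar>prob_space.expectation P (\<lambda>\<omega>'. f (Z \<omega>')) - emp_mean Ms Zs n f \<omega>\<bar>)"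
proof -
  interpret prob_space P by fact
  define S where "S = {(m, k). 1 \<le> m \<and> 1 \<le> k \<and> k \<le> Ms m}"
  define X where "X = (\<lambda>i. case i of None \<Rightarrow> Z | Some (m, k) \<Rightarrow> Zs m k)"
  have indep: "indep_vars (\<lambda>_. borel) X ({None} \<union> Some ` S)"
    using assms(5) unfolding X_def S_def .
  have G: "G = sigma (space P) (\<Union>j\<in>Some ` S. {X j -` A \<inter> space P | A. A \<in> sets borel})"
    using assms(8) unfolding S_def X_def by (simp add: split_beta')
  have X: "X i \<in> borel_measurable P" if "i \<in> {None} \<union> Some ` S" for i
    using indep that by (auto simp: indep_vars_def)
  have Z: "Z \<in> borel_measurable P" using X[of None] by (simp add: X_def)
  have Zs: "Zs n k \<in> borel_measurable P" if "k \<in> {1..Ms n}" for k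
    using X[of "Some (n, k)"] assms(7) that by (simp add: X_def S_def)
  have intZ: "integrable P (\<lambda>\<omega>. norm (Z \<omega>))"
    using assms(6) by (simp add: assms(3)[symmetric] integrable_distr_eq[OF Z])
  have sub: "subalgebra P G" and indep_Z: "indep_set (sets G) {Z -` B \<inter> space P | B. B \<in> sets borel}"
    using indep_vars_generated_subalgebra[OF indep _ _ G, of None] by (auto simp: X_def)
  have "Ms n > 0" using assms(2,7) by simp
  from is_ess_sup_lipschitz_deviation[where Ms=Ms and n=n and Zs=Zs, OF sub Z indep_Z intZ this Zs]
  show ?thesis by simp
qed
end
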